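(* Let ${\bf D}$ be an $L\times N$ complex matrix with $L=Rd$, $N=Md$, whose columns have unit Euclidean norm, partitioned into consecutive column-blocks ${\bf D}[1],\dots,{\bf D}[M]$ of size $L\times d$, and assume ${\bf D}{\bf g}\neq{\bf 0}$ for every nonzero block $2k$-sparse ${\bf g}\in\mathbb{C}^N$. Let $\mu_{\mathrm B}>0$ be the block-coherence and $\nu$ the sub-coherence of ${\bf D}$. If $$kd<\frac12\left(\mu_{\mathrm B}^{-1}+d-(d-1)\frac{\nu}{\mu_{\mathrm B}}\right),$$ then for every set $\Lambda_0$ of $k$ block indices, letting ${\bf D}_0$ be the $L\times(kd)$ matrix formed by the blocks ${\bf D}[\ell]$, $\ell\in\Lambda_0$, and $\overline{{\bf D}}_0$ the matrix formed by the remaining blocks, we have $\rho_c({\bf D}_0^\dagger\overline{{\bf D}}_0)<1$.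
   Context: $\rho(\cdot)$ is the spectral norm, ${\bf A}^\dagger$ the Moore–Penrose pseudo-inverse. Block-coherence: $\mu_{\mathrm B}=\max_{\ell, r\neq\ell}\frac1d\rho({\bf D}^H[\ell]{\bf D}[r])$. Sub-coherence: $\nu=\max_\ell\max_{i,j\neq i}|{\bf d}_i^H{\bf d}_j|$ with ${\bf d}_i,{\bf d}_j$ columns of the same block ${\bf D}[\ell]$ ($\nu=0$ if $d=1$). For a matrix ${\bf A}$ whose dimensions are multiples of $d$, with $(\ell,r)$th $d\times d$ block ${\bf A}[\ell,r]$, $\rho_c({\bf A})=\max_r\sum_\ell\rho({\bf A}[\ell,r])$. A vector in $\mathbb{C}^N$ is block $2k$-sparse if at most $2k$ of its consecutive length-$d$ blocks are nonzero. *)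

theory Defs
  imports "HOL-Analysis.Analysis"
begin

text \<open>Matrices are represented as functions nat => nat => complex together with
explicit dimensions (an m x n matrix only uses entries (i,j) with i<m, j<n);
vectors of length n are functions nat => complex using indices < n.
All indices (rows, columns, blocks) are 0-based.\<close>

definition vnorm :: "nat \<Rightarrow> (nat \<Rightarrow> complex) \<Rightarrow> real" where
  "vnorm n x = sqrt (\<Sum>i<n. (cmod (x i))\<^sup>2)"

definition matvec :: "nat \<Rightarrow> (nat \<Rightarrow> nat \<Rightarrow> complex) \<Rightarrow> (nat \<Rightarrow> complex) \<Rightarrow> (nat \<Rightarrow> complex)" where
  "matvec n A x = (\<lambda>i. \<Sum>j<n. A i j * x j)"

definition matmul :: "(nat \<Rightarrow> nat \<Rightarrow> complex) \<Rightarrow> nat \<Rightarrow> (nat \<Rightarrow> nat \<Rightarrow> complex) \<Rightarrow> (nat \<Rightarrow> nat \<Rightarrow> complex)" where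
  "matmul A p B = (\<lambda>i j. \<Sum>l<p. A i l * B l j)"

definition adj :: "(nat \<Rightarrow> nat \<Rightarrow> complex) \<Rightarrow> (nat \<Rightarrow> nat \<Rightarrow> complex)" where
  "adj A = (\<lambda>i j. cnj (A j i))"

definition mat_eq :: "nat \<Rightarrow> nat \<Rightarrow> (nat \<Rightarrow> nat \<Rightarrow> complex) \<Rightarrow> (nat \<Rightarrow> nat \<Rightarrow> complex) \<Rightarrow> bool" where
  "mat_eq m n A B \<longleftrightarrow> (\<forall>i<m. \<forall>j<n. A i j = B i j)"

definition spec_norm :: "nat \<Rightarrow> nat \<Rightarrow> (nat \<Rightarrow> nat \<Rightarrow> complex) \<Rightarrow> real" where
  "spec_norm m n A = Sup {vnorm m (matvec n A x) | x. vnorm n x \<le> 1}"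

definition pinv :: "nat \<Rightarrow> nat \<Rightarrow> (nat \<Rightarrow> nat \<Rightarrow> complex) \<Rightarrow> (nat \<Rightarrow> nat \<Rightarrow> complex)" where
  "pinv m n A = (THE X. (\<forall>i j. \<not> (i < n \<and> j < m) \<longrightarrow> X i j = 0)
      \<and> mat_eq m n (matmul (matmul A n X) m A) A
      \<and> mat_eq n m (matmul (matmul X m A) n X) X
      \<and> mat_eq m m (adj (matmul A n X)) (matmul A n X)
      \<and> mat_eq n n (adj (matmul X m A)) (matmul X m A))"

definition blk :: "nat \<Rightarrow> (nat \<Rightarrow> nat \<Rightarrow> complex) \<Rightarrow> nat \<Rightarrow> (nat \<Rightarrow> nat \<Rightarrow> complex)" where
  "blk d D l = (\<lambda>i j. D i (l * d + j))"

definition subblock :: "nat \<Rightarrow> (nat \<Rightarrow> nat \<Rightarrow> complex) \<Rightarrow> nat \<Rightarrow> nat \<Rightarrow> (nat \<Rightarrow> nat \<Rightarrow> complex)" where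
  "subblock d A l r = (\<lambda>i j. A (l * d + i) (r * d + j))"

definition block_coherence :: "nat \<Rightarrow> nat \<Rightarrow> nat \<Rightarrow> (nat \<Rightarrow> nat \<Rightarrow> complex) \<Rightarrow> real" where
  "block_coherence L M d D = Max (insert 0
     {spec_norm d d (matmul (adj (blk d D l)) L (blk d D r)) / real d | l r. l < M \<and> r < M \<and> r \<noteq> l})"

definition sub_coherence :: "nat \<Rightarrow> nat \<Rightarrow> nat \<Rightarrow> (nat \<Rightarrow> nat \<Rightarrow> complex) \<Rightarrow> real" where
  "sub_coherence L M d D = Max (insert 0
     {cmod (\<Sum>i<L. cnj (D i (l * d + a)) * D i (l * d + b)) | l a b. l < M \<and> a < d \<and> b < d \<and> b \<noteq> a})"

definition rho_c :: "nat \<Rightarrow> nat \<Rightarrow> nat \<Rightarrow> (nat \<Rightarrow> nat \<Rightarrow> complex) \<Rightarrow> real" where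
  "rho_c p q d A = Max (insert 0 {(\<Sum>l<p. spec_norm d d (subblock d A l r)) | r. r < q})"

definition block_sparse :: "nat \<Rightarrow> nat \<Rightarrow> nat \<Rightarrow> (nat \<Rightarrow> complex) \<Rightarrow> bool" where
  "block_sparse M d s g \<longleftrightarrow> card {l. l < M \<and> (\<exists>t<d. g (l * d + t) \<noteq> 0)} \<le> s"

definition sel_blocks :: "nat \<Rightarrow> (nat \<Rightarrow> nat \<Rightarrow> complex) \<Rightarrow> nat list \<Rightarrow> (nat \<Rightarrow> nat \<Rightarrow> complex)" where
  "sel_blocks d D ls = (\<lambda>i j. D i ((ls ! (j div d)) * d + j mod d))"

end

theory Submission
  imports Defs "Jordan_Normal_Form.Determinant"
begin

text \<open>Let \<open>G = D\<^sub>0\<^sup>H D\<^sub>0\<close> and \<open>E = G - I\<close>. The columns have unit norm, so each diagonal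
block of \<open>E\<close> has zero diagonal and off-diagonal entries of modulus at most \<open>\<nu>\<close>; by the Schur test
its spectral norm is at most \<open>(d - 1) \<nu>\<close>. Off-diagonal blocks of \<open>E\<close> have spectral norm at most
\<open>d \<mu>\<^sub>B\<close>, so every block column of \<open>E\<close> has block-norm sum at most
\<open>e = (d - 1) \<nu> + (k - 1) d \<mu>\<^sub>B\<close>, and the hypothesis is exactly \<open>k d \<mu>\<^sub>B + e < 1\<close>.
Writing \<open>G Z = B\<close> as \<open>Z = B - E Z\<close> bounds every block column sum \<open>S\<close> of \<open>Z\<close> by
\<open>S \<le> S\<^sub>B + e S\<close>. For \<open>B = 0\<close> this makes \<open>G\<close> invertible;
then \<open>Z = pinv D\<^sub>0 D\<^sub>1 = G\<^sup>-\<^sup>1 D\<^sub>0\<^sup>H D\<^sub>1\<close> and \<open>S\<^sub>B \<le> k d \<mu>\<^sub>B\<close> give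
\<open>S \<le> k d \<mu>\<^sub>B / (1 - e) < 1\<close>.\<close>

subsection \<open>Vector norms and spectral norms\<close>

lemma vnorm_eq_L2_set: "vnorm n x = L2_set (\<lambda>i. cmod (x i)) {..<n}"
  by (simp add: vnorm_def L2_set_def)

lemma vnorm_nonneg: "0 \<le> vnorm n x"
  by (simp add: vnorm_eq_L2_set)

lemma vnorm_cong: "(\<And>i. i < n \<Longrightarrow> x i = y i) \<Longrightarrow> vnorm n x = vnorm n y"
  unfolding vnorm_def by (intro arg_cong[where f=sqrt] sum.cong) auto

lemma vnorm_zero: "vnorm n (\<lambda>i. 0) = 0"
  by (simp add: vnorm_def)

lemma vnorm_add_le: "vnorm n (\<lambda>i. x i + y i) \<le> vnorm n x + vnorm n y"
proof -
  have "vnorm n (\<lambda>i. x i + y i) \<le> L2_set (\<lambda>i. cmod (x i) + cmod (y i)) {..<n}"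
    unfolding vnorm_eq_L2_set by (rule L2_set_mono) (auto simp: norm_triangle_ineq)
  also have "\<dots> \<le> vnorm n x + vnorm n y"
    unfolding vnorm_eq_L2_set by (rule L2_set_triangle_ineq)
  finally show ?thesis .
qed

lemma vnorm_diff_le: "vnorm n (\<lambda>i. x i - y i) \<le> vnorm n x + vnorm n y"
  using vnorm_add_le[of n x "\<lambda>i. - y i"]
  by (simp add: vnorm_eq_L2_set)

lemma vnorm_sum_le: "finite S \<Longrightarrow> vnorm n (\<lambda>i. \<Sum>m\<in>S. f m i) \<le> (\<Sum>m\<in>S. vnorm n (f m))"
proof (induction S rule: finite_induct)
  case empty
  then show ?case by (simp add: vnorm_zero)
next
  case (insert a S)
  then have "vnorm n (\<lambda>i. \<Sum>m\<in>insert a S. f m i) \<le> vnorm n (f a) + vnorm n (\<lambda>i. \<Sum>m\<in>S. f m i)"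
    using vnorm_add_le[of n "f a"] by simp
  then show ?case using insert by simp
qed

lemma vnorm_scale: "vnorm n (\<lambda>i. c * x i) = cmod c * vnorm n x"
  unfolding vnorm_eq_L2_set by (simp add: L2_set_right_distrib norm_mult)

lemma vnorm_eq_0_iff: "vnorm n x = 0 \<longleftrightarrow> (\<forall>i<n. x i = 0)"
  unfolding vnorm_eq_L2_set by (auto simp: L2_set_eq_0_iff)

lemma vnorm_power2: "(vnorm n x)\<^sup>2 = (\<Sum>i<n. (cmod (x i))\<^sup>2)"
  unfolding vnorm_def by (simp add: sum_nonneg)

lemma matvec_zero: "matvec n A (\<lambda>_. 0) = (\<lambda>_. 0)"
  by (simp add: matvec_def)

lemma matvec_scale: "matvec n A (\<lambda>j. c * x j) = (\<lambda>i. c * matvec n A x i)"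
  by (simp add: matvec_def sum_distrib_left algebra_simps)

lemma matvec_cong: "(\<And>j. j < n \<Longrightarrow> x j = y j) \<Longrightarrow> matvec n A x = matvec n A y"
  unfolding matvec_def by (intro ext sum.cong) auto

lemma vnorm_matvec_le_frobenius:
  "vnorm m (matvec n A x) \<le> sqrt (\<Sum>i<m. \<Sum>j<n. (cmod (A i j))\<^sup>2) * vnorm n x"
proof -
  have row: "(cmod (matvec n A x i))\<^sup>2 \<le> (\<Sum>j<n. (cmod (A i j))\<^sup>2) * (vnorm n x)\<^sup>2" for i
  proof -
    have "cmod (matvec n A x i) \<le> (\<Sum>j<n. \<bar>cmod (A i j)\<bar> * \<bar>cmod (x j)\<bar>)"
      unfolding matvec_def by (rule order_trans[OF norm_sum]) (simp add: norm_mult)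
    also have "\<dots> \<le> L2_set (\<lambda>j. cmod (A i j)) {..<n} * vnorm n x"
      unfolding vnorm_eq_L2_set by (rule L2_set_mult_ineq)
    finally have "(cmod (matvec n A x i))\<^sup>2 \<le> (L2_set (\<lambda>j. cmod (A i j)) {..<n} * vnorm n x)\<^sup>2"
      by (rule power_mono) simp
    then show ?thesis by (simp add: power_mult_distrib L2_set_def sum_nonneg)
  qed
  have "vnorm m (matvec n A x) \<le> sqrt (\<Sum>i<m. (\<Sum>j<n. (cmod (A i j))\<^sup>2) * (vnorm n x)\<^sup>2)"
    unfolding vnorm_def[of m] by (intro real_sqrt_le_mono sum_mono row)
  also have "\<dots> = sqrt (\<Sum>i<m. \<Sum>j<n. (cmod (A i j))\<^sup>2) * vnorm n x"
    by (simp add: sum_distrib_right[symmetric] real_sqrt_mult vnorm_nonneg)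
  finally show ?thesis .
qed

lemma bdd_above_spec_norm_set: "bdd_above {vnorm m (matvec n A x) | x. vnorm n x \<le> 1}"
proof (rule bdd_aboveI, clarify)
  fix x :: "nat \<Rightarrow> complex" assume x: "vnorm n x \<le> 1"
  have "vnorm m (matvec n A x) \<le> sqrt (\<Sum>i<m. \<Sum>j<n. (cmod (A i j))\<^sup>2) * vnorm n x"
    by (rule vnorm_matvec_le_frobenius)
  also have "\<dots> \<le> sqrt (\<Sum>i<m. \<Sum>j<n. (cmod (A i j))\<^sup>2)"
    using mult_left_mono[OF x, of "sqrt (\<Sum>i<m. \<Sum>j<n. (cmod (A i j))\<^sup>2)"] by (simp add: sum_nonneg)
  finally show "vnorm m (matvec n A x) \<le> sqrt (\<Sum>i<m. \<Sum>j<n. (cmod (A i j))\<^sup>2)" .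
qed

lemma vnorm_matvec_le_spec_norm_unit: "vnorm n x \<le> 1 \<Longrightarrow> vnorm m (matvec n A x) \<le> spec_norm m n A"
  unfolding spec_norm_def by (rule cSup_upper[OF _ bdd_above_spec_norm_set]) auto

lemma spec_norm_nonneg: "0 \<le> spec_norm m n A"
  using vnorm_matvec_le_spec_norm_unit[of n "\<lambda>_. 0" m A] by (simp add: vnorm_zero matvec_zero)

lemma vnorm_matvec_le: "vnorm m (matvec n A x) \<le> spec_norm m n A * vnorm n x"
proof (cases "vnorm n x = 0")
  case True
  then have "matvec n A x = matvec n A (\<lambda>_. 0)"
    by (intro matvec_cong) (auto simp: vnorm_eq_0_iff)
  then show ?thesis using True by (simp add: matvec_zero vnorm_zero)
next
  case False
  define c where "c = vnorm n x"
  have c: "c > 0" using False vnorm_nonneg[of n x] by (simp add: c_def)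
  define y where "y = (\<lambda>j. complex_of_real (1/c) * x j)"
  have "vnorm n y = cmod (complex_of_real (1/c)) * c" unfolding y_def vnorm_scale c_def ..
  then have "vnorm n y = 1" using c by (simp add: norm_divide)
  then have "vnorm m (matvec n A y) \<le> spec_norm m n A" by (intro vnorm_matvec_le_spec_norm_unit) simp
  moreover have "vnorm m (matvec n A y) = cmod (complex_of_real (1/c)) * vnorm m (matvec n A x)"
    unfolding y_def matvec_scale vnorm_scale ..
  then have "vnorm m (matvec n A y) = vnorm m (matvec n A x) / c"
    using c by (simp add: norm_divide)
  ultimately show ?thesis using c by (simp add: c_def field_simps)
qed

lemma spec_norm_le:
  assumes "\<And>x. vnorm m (matvec n A x) \<le> C * vnorm n x" and "0 \<le> C"
  shows "spec_norm m n A \<le> C"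
  unfolding spec_norm_def
proof (rule cSup_least)
  have "vnorm m (matvec n A (\<lambda>_. 0)) \<in> {vnorm m (matvec n A x) | x. vnorm n x \<le> 1}"
    by (auto simp: vnorm_zero)
  then show "{vnorm m (matvec n A x) | x. vnorm n x \<le> 1} \<noteq> {}" by blast
  fix y assume "y \<in> {vnorm m (matvec n A x) | x. vnorm n x \<le> 1}"
  then obtain x where y: "y = vnorm m (matvec n A x)" and x: "vnorm n x \<le> 1"
    by auto
  have "y \<le> C * vnorm n x" using assms y by simp
  also have "\<dots> \<le> C" using mult_left_mono[OF x assms(2)] by simp
  finally show "y \<le> C" .
qed

lemma spec_norm_cong:
  assumes "\<And>i j. i < m \<Longrightarrow> j < n \<Longrightarrow> A i j = B i j"
  shows "spec_norm m n A = spec_norm m n B"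
proof -
  have "\<And>x. vnorm m (matvec n A x) = vnorm m (matvec n B x)"
    by (intro vnorm_cong) (auto simp: matvec_def assms intro!: sum.cong)
  then show ?thesis by (simp add: spec_norm_def)
qed

lemma spec_norm_zero: "spec_norm m n (\<lambda>_ _. 0) = 0"
  using spec_norm_le[of m n "\<lambda>_ _. 0" 0] spec_norm_nonneg[of m n "\<lambda>_ _. 0"]
  by (simp add: matvec_def vnorm_zero)

lemma spec_norm_eq_0_imp_entry_eq_0:
  assumes "spec_norm m n A = 0" and "i < m" and "j < n"
  shows "A i j = 0"
proof -
  define u where "u = (\<lambda>t. if t = j then 1 else (0::complex))"
  have "vnorm m (matvec n A u) \<le> 0"
    using vnorm_matvec_le[of m n A u] assms(1) by simp
  then have "matvec n A u i = 0"
    using vnorm_nonneg[of m] vnorm_eq_0_iff assms(2) by (metis order_antisym)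
  moreover have "matvec n A u i = A i j"
    using assms(3) by (simp add: matvec_def u_def if_distrib cong: if_cong)
  ultimately show ?thesis by simp
qed

subsection \<open>The Schur test\<close>

lemma cmod_matvec_power2_le_weighted:
  assumes row: "(\<Sum>j<n. cmod (A i j)) \<le> c"
  shows "(cmod (matvec n A x i))\<^sup>2 \<le> c * (\<Sum>j<n. cmod (A i j) * (cmod (x j))\<^sup>2)"
proof -
  define f where "f = (\<lambda>j. sqrt (cmod (A i j)))"
  define g where "g = (\<lambda>j. sqrt (cmod (A i j)) * cmod (x j))"
  have "cmod (matvec n A x i) \<le> (\<Sum>j<n. cmod (A i j) * cmod (x j))"
    unfolding matvec_def by (rule order_trans[OF norm_sum]) (simp add: norm_mult)
  also have "\<dots> = (\<Sum>j<n. \<bar>f j\<bar> * \<bar>g j\<bar>)"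
    unfolding f_def g_def by (intro sum.cong refl) (simp add: abs_mult mult.assoc[symmetric])
  also have "\<dots> \<le> L2_set f {..<n} * L2_set g {..<n}" by (rule L2_set_mult_ineq)
  finally have "(cmod (matvec n A x i))\<^sup>2 \<le> (L2_set f {..<n} * L2_set g {..<n})\<^sup>2"
    by (rule power_mono) simp
  also have "\<dots> = (\<Sum>j<n. cmod (A i j)) * (\<Sum>j<n. cmod (A i j) * (cmod (x j))\<^sup>2)"
    unfolding power_mult_distrib L2_set_def f_def g_def
    by (simp add: sum_nonneg power_mult_distrib)
  also have "\<dots> \<le> c * (\<Sum>j<n. cmod (A i j) * (cmod (x j))\<^sup>2)"
    by (intro mult_right_mono row sum_nonneg) auto
  finally show ?thesis .
qed

lemma spec_norm_le_schur_test:
  assumes row: "\<And>i. i < m \<Longrightarrow> (\<Sum>j<n. cmod (A i j)) \<le> c"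
    and col: "\<And>j. j < n \<Longrightarrow> (\<Sum>i<m. cmod (A i j)) \<le> c"
    and c: "0 \<le> c"
  shows "spec_norm m n A \<le> c"
proof (rule spec_norm_le[OF _ c])
  fix x
  have "(vnorm m (matvec n A x))\<^sup>2 = (\<Sum>i<m. (cmod (matvec n A x i))\<^sup>2)" by (rule vnorm_power2)
  also have "\<dots> \<le> (\<Sum>i<m. c * (\<Sum>j<n. cmod (A i j) * (cmod (x j))\<^sup>2))"
    by (intro sum_mono cmod_matvec_power2_le_weighted row) auto
  also have "\<dots> = c * (\<Sum>j<n. (\<Sum>i<m. cmod (A i j)) * (cmod (x j))\<^sup>2)"
    by (simp add: sum_distrib_left[symmetric] sum_distrib_right) (rule disjI2, rule sum.swap)
  also have "\<dots> \<le> c * (\<Sum>j<n. c * (cmod (x j))\<^sup>2)"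
    by (intro mult_left_mono c sum_mono mult_right_mono col) auto
  also have "\<dots> = c\<^sup>2 * (\<Sum>j<n. (cmod (x j))\<^sup>2)"
    by (simp add: sum_distrib_left power2_eq_square mult.assoc)
  also have "\<dots> = (c * vnorm n x)\<^sup>2"
    by (simp only: power_mult_distrib vnorm_power2)
  finally show "vnorm m (matvec n A x) \<le> c * vnorm n x"
    by (rule power2_le_imp_le) (simp add: c vnorm_nonneg)
qed

lemma spec_norm_zero_diag_le:
  assumes diag: "\<And>i. i < d \<Longrightarrow> A i i = 0"
    and off: "\<And>i j. i < d \<Longrightarrow> j < d \<Longrightarrow> i \<noteq> j \<Longrightarrow> cmod (A i j) \<le> \<nu>"
    and "0 \<le> \<nu>" and "0 < d"
  shows "spec_norm d d A \<le> (real d - 1) * \<nu>"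
proof -
  have count: "(\<Sum>j<d. if j = i then 0 else \<nu>) = (real d - 1) * \<nu>" if "i < d" for i
  proof -
    have "(\<Sum>j<d. if j = i then 0 else \<nu>) = (\<Sum>j\<in>{..<d}-{i}. \<nu>)"
      by (simp add: sum.If_cases Diff_eq Int_commute)
    then show ?thesis using that by (simp add: of_nat_diff)
  qed
  show ?thesis
  proof (rule spec_norm_le_schur_test)
    show "0 \<le> (real d - 1) * \<nu>" using assms(3,4) by simp
    fix i assume i: "i < d"
    have "(\<Sum>j<d. cmod (A i j)) \<le> (\<Sum>j<d. if j = i then 0 else \<nu>)"
      using diag off i by (intro sum_mono) auto
    then show "(\<Sum>j<d. cmod (A i j)) \<le> (real d - 1) * \<nu>" using count[OF i] by simp
    have "(\<Sum>j<d. cmod (A j i)) \<le> (\<Sum>j<d. if j = i then 0 else \<nu>)"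
      using diag off i by (intro sum_mono) auto
    then show "(\<Sum>j<d. cmod (A j i)) \<le> (real d - 1) * \<nu>" using count[OF i] by simp
  qed
qed

definition idm :: "nat \<Rightarrow> nat \<Rightarrow> complex" where
  "idm i j = (if i = j then 1 else 0)"

lemma matmul_assoc: "matmul (matmul A n B) p C = matmul A n (matmul B p C)"
  unfolding matmul_def
  by (intro ext) (simp add: sum_distrib_left sum_distrib_right mult.assoc sum.swap[of _ "{..<n}"])

lemma matvec_matmul: "matvec p (matmul A n B) x i = matvec n A (matvec p B x) i"
  unfolding matvec_def matmul_def
  by (simp add: sum_distrib_left sum_distrib_right mult.assoc sum.swap[of _ "{..<n}"])

lemma adj_adj [simp]: "adj (adj A) = A"
  by (simp add: adj_def)

lemma adj_matmul: "adj (matmul A n B) = matmul (adj B) n (adj A)"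
  unfolding adj_def matmul_def by (intro ext) (simp add: mult.commute)

lemma matmul_cong:
  "(\<And>p. p < n \<Longrightarrow> A i p = A' i p) \<Longrightarrow> (\<And>p. p < n \<Longrightarrow> B p j = B' p j) \<Longrightarrow>
   matmul A n B i j = matmul A' n B' i j"
  unfolding matmul_def by (intro sum.cong) auto

lemma matmul_idm_right:
  assumes "\<And>p. p < n \<Longrightarrow> I p j = idm p j" and "j < n"
  shows "matmul A n I i j = A i j"
proof -
  have "matmul A n I i j = (\<Sum>p<n. A i p * idm p j)"
    unfolding matmul_def using assms(1) by (intro sum.cong) auto
  then show ?thesis using assms(2) by (simp add: idm_def if_distrib cong: if_cong)
qed

lemma matmul_idm_left:
  assumes "\<And>p. p < n \<Longrightarrow> I i p = idm i p" and "i < n"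
  shows "matmul I n A i j = A i j"
proof -
  have "matmul I n A i j = (\<Sum>p<n. if i = p then A p j else 0)"
    unfolding matmul_def using assms(1) by (intro sum.cong) (auto simp: idm_def)
  then show ?thesis using assms(2) by simp
qed

lemma matmul_minus_idm:
  "i < n \<Longrightarrow> matmul (\<lambda>a b. G a b - idm a b) n Z i j = matmul G n Z i j - Z i j"
  using matmul_idm_left[of n idm i Z j]
  by (simp add: matmul_def left_diff_distrib sum_subtractf)

lemma matrix_inverse_exists:
  fixes G :: "nat \<Rightarrow> nat \<Rightarrow> complex"
  assumes inj: "\<And>v. \<forall>i<n. matvec n G v i = 0 \<Longrightarrow> \<forall>i<n. v i = 0"
  obtains H where "\<forall>i<n. \<forall>j<n. matmul G n H i j = idm i j"
    and "\<forall>i<n. \<forall>j<n. matmul H n G i j = idm i j"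
proof -
  define Gm where "Gm = mat n n (\<lambda>(i, j). G i j)"
  have Gc: "Gm \<in> carrier_mat n n" by (simp add: Gm_def)
  have det: "Determinant.det Gm \<noteq> 0"
  proof
    assume "Determinant.det Gm = 0"
    then obtain v where v: "v \<in> carrier_vec n" "v \<noteq> 0\<^sub>v n" "Gm *\<^sub>v v = 0\<^sub>v n"
      using det_0_iff_vec_prod_zero[OF Gc] by blast
    have "(Gm *\<^sub>v v) $ i = matvec n G (\<lambda>i. v $ i) i" if "i < n" for i
      using that v(1) by (simp add: Gm_def matvec_def scalar_prod_def atLeast0LessThan)
    then have "\<forall>i<n. matvec n G (\<lambda>i. v $ i) i = 0" using v(3) by simp
    then have "\<forall>i<n. v $ i = 0" by (rule inj)
    then have "v = 0\<^sub>v n" using v(1) by (intro eq_vecI) auto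
    then show False using v(2) by simp
  qed
  define Hm where "Hm = (1 / Determinant.det Gm) \<cdot>\<^sub>m adj_mat Gm"
  have Ac: "adj_mat Gm \<in> carrier_mat n n" using adj_mat(1)[OF Gc] .
  have Hc: "Hm \<in> carrier_mat n n" using Ac by (simp add: Hm_def)
  have GH: "Gm * Hm = 1\<^sub>m n"
    using det by (simp add: Hm_def mult_smult_distrib[OF Gc Ac] adj_mat(2)[OF Gc]) (rule eq_matI, auto)
  have HG: "Hm * Gm = 1\<^sub>m n"
    using det by (simp add: Hm_def mult_smult_assoc_mat[OF Ac Gc] adj_mat(3)[OF Gc]) (rule eq_matI, auto)
  show thesis
  proof (rule that[of "\<lambda>i j. Hm $$ (i, j)"]; intro allI impI)
    fix i j assume i: "i < n" and j: "j < n"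
    have "(Gm * Hm) $$ (i, j) = matmul G n (\<lambda>i j. Hm $$ (i, j)) i j"
      using i j Hc by (simp add: Gm_def matmul_def scalar_prod_def atLeast0LessThan)
    then show "matmul G n (\<lambda>i j. Hm $$ (i, j)) i j = idm i j" using GH i j by (simp add: idm_def)
    have "(Hm * Gm) $$ (i, j) = matmul (\<lambda>i j. Hm $$ (i, j)) n G i j"
      using i j Hc by (simp add: Gm_def matmul_def scalar_prod_def atLeast0LessThan)
    then show "matmul (\<lambda>i j. Hm $$ (i, j)) n G i j = idm i j" using HG i j by (simp add: idm_def)
  qed
qed

subsection \<open>The pseudo-inverse of a matrix with invertible Gram matrix\<close>

definition penrose_conditions ::
  "nat \<Rightarrow> nat \<Rightarrow> (nat \<Rightarrow> nat \<Rightarrow> complex) \<Rightarrow> (nat \<Rightarrow> nat \<Rightarrow> complex) \<Rightarrow> bool" where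
  "penrose_conditions m n A X \<longleftrightarrow> (\<forall>i j. \<not> (i < n \<and> j < m) \<longrightarrow> X i j = 0)
      \<and> mat_eq m n (matmul (matmul A n X) m A) A
      \<and> mat_eq n m (matmul (matmul X m A) n X) X
      \<and> mat_eq m m (adj (matmul A n X)) (matmul A n X)
      \<and> mat_eq n n (adj (matmul X m A)) (matmul X m A)"

lemma pinv_eq_The_penrose: "pinv m n A = (THE X. penrose_conditions m n A X)"
  by (simp add: pinv_def penrose_conditions_def)

lemma inverse_of_self_adjoint_self_adjoint:
  assumes G: "adj G = G" and GH: "\<And>i j. i < n \<Longrightarrow> j < n \<Longrightarrow> matmul G n H i j = idm i j"
    and "i < n" and "j < n"
  shows "adj H i j = H i j"
proof -
  have "adj H i j = matmul (adj H) n (matmul G n H) i j"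
    using assms(3,4) GH by (intro matmul_idm_right[symmetric]) auto
  also have "\<dots> = matmul (matmul (adj H) n G) n H i j" by (simp add: matmul_assoc)
  also have "\<dots> = matmul idm n H i j"
  proof (rule matmul_cong)
    fix p assume "p < n"
    have "matmul (adj H) n G i p = adj (matmul G n H) i p"
      by (simp add: adj_matmul G)
    also have "\<dots> = idm i p" using GH[of p i] \<open>p < n\<close> assms(3) by (simp add: adj_def idm_def)
    finally show "matmul (adj H) n G i p = idm i p" .
  qed simp
  also have "\<dots> = H i j" using assms(3,4) by (intro matmul_idm_left) auto
  finally show ?thesis .
qed

lemma penrose_conditions_inverse_gram_mult_adj:
  fixes A H :: "nat \<Rightarrow> nat \<Rightarrow> complex"
  assumes GH: "\<And>i j. i < n \<Longrightarrow> j < n \<Longrightarrow> matmul (matmul (adj A) m A) n H i j = idm i j"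
    and HG: "\<And>i j. i < n \<Longrightarrow> j < n \<Longrightarrow> matmul H n (matmul (adj A) m A) i j = idm i j"
  shows "penrose_conditions m n A (\<lambda>i j. if i < n \<and> j < m then matmul H n (adj A) i j else 0)"
    (is "penrose_conditions m n A ?X")
proof -
  have XA: "matmul ?X m A i j = idm i j" if "i < n" "j < n" for i j
    using HG[OF that] that by (simp add: matmul_cong[of m ?X i "matmul H n (adj A)"] matmul_assoc)
  have AX: "matmul A n ?X i j = matmul A n (matmul H n (adj A)) i j" if "j < m" for i j
    using that by (intro matmul_cong) auto
  have "adj (matmul (adj A) m A) = matmul (adj A) m A"
    by (simp add: adj_matmul)
  then have herm: "adj H i j = H i j" if "i < n" "j < n" for i j
    using GH that by (intro inverse_of_self_adjoint_self_adjoint)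
  have "adj (matmul A n ?X) i j = matmul A n ?X i j" if "i < m" "j < m" for i j
  proof -
    have "adj (matmul A n ?X) i j = adj (matmul A n (matmul H n (adj A))) i j"
      using AX[OF that(1)] by (simp add: adj_def)
    also have "\<dots> = matmul A n (matmul (adj H) n (adj A)) i j"
      by (simp add: adj_matmul matmul_assoc)
    also have "\<dots> = matmul A n (matmul H n (adj A)) i j"
      using herm by (intro matmul_cong refl) (auto intro: matmul_cong)
    finally show ?thesis using AX[OF that(2)] by simp
  qed
  moreover have "matmul (matmul A n ?X) m A i j = A i j" if "j < n" for i j
    using that XA by (simp add: matmul_assoc matmul_idm_right)
  moreover have "matmul (matmul ?X m A) n ?X i j = ?X i j" if "i < n" for i j
    using that XA by (intro matmul_idm_left) auto
  moreover have "adj (matmul ?X m A) i j = matmul ?X m A i j" if "i < n" "j < n" for i j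
    using that XA by (simp add: adj_def idm_def)
  ultimately show ?thesis
    unfolding penrose_conditions_def mat_eq_def by auto
qed

lemma penrose_conditions_unique:
  fixes A H :: "nat \<Rightarrow> nat \<Rightarrow> complex"
  assumes HG: "\<And>i j. i < n \<Longrightarrow> j < n \<Longrightarrow> matmul H n (matmul (adj A) m A) i j = idm i j"
    and Y: "penrose_conditions m n A Y"
  shows "Y = (\<lambda>i j. if i < n \<and> j < m then matmul H n (adj A) i j else 0)"
proof (intro ext)
  fix i j
  have AYA: "\<And>a b. a < m \<Longrightarrow> b < n \<Longrightarrow> matmul (matmul A n Y) m A a b = A a b"
    and AY: "\<And>a b. a < m \<Longrightarrow> b < m \<Longrightarrow> adj (matmul A n Y) a b = matmul A n Y a b"
    using Y unfolding penrose_conditions_def mat_eq_def by auto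
  have normal: "matmul (matmul (adj A) m A) n Y a b = adj A a b" if "a < n" "b < m" for a b
  proof -
    have "adj A a b = adj (matmul (matmul A n Y) m A) a b"
      using AYA[of b a] that by (simp add: adj_def)
    also have "\<dots> = matmul (adj A) m (adj (matmul A n Y)) a b" by (simp add: adj_matmul)
    also have "\<dots> = matmul (adj A) m (matmul A n Y) a b"
      using AY that by (intro matmul_cong) auto
    finally show ?thesis by (simp add: matmul_assoc)
  qed
  show "Y i j = (if i < n \<and> j < m then matmul H n (adj A) i j else 0)"
  proof (cases "i < n \<and> j < m")
    case True
    have "Y i j = matmul (matmul H n (matmul (adj A) m A)) n Y i j"
      using True HG by (intro matmul_idm_left[symmetric]) auto
    also have "\<dots> = matmul H n (adj A) i j"
      unfolding matmul_assoc[of H n "matmul (adj A) m A"] using True normal by (intro matmul_cong) auto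
    finally show ?thesis using True by simp
  qed (use Y in \<open>auto simp: penrose_conditions_def\<close>)
qed

lemma pinv_eq_inverse_gram_mult_adj:
  assumes "\<And>i j. i < n \<Longrightarrow> j < n \<Longrightarrow> matmul (matmul (adj A) m A) n H i j = idm i j"
    and "\<And>i j. i < n \<Longrightarrow> j < n \<Longrightarrow> matmul H n (matmul (adj A) m A) i j = idm i j"
  shows "pinv m n A = (\<lambda>i j. if i < n \<and> j < m then matmul H n (adj A) i j else 0)"
  unfolding pinv_eq_The_penrose
  by (rule the_equality) (use assms penrose_conditions_inverse_gram_mult_adj
      penrose_conditions_unique in blast)+

lemma pinv_solves_normal_equations:
  assumes inj: "\<And>v. \<forall>i<n. matvec n (matmul (adj A) m A) v i = 0 \<Longrightarrow> \<forall>i<n. v i = 0"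
    and "i < n"
  shows "matmul (matmul (adj A) m A) n (matmul (pinv m n A) m B) i j = matmul (adj A) m B i j"
proof -
  obtain H where GH: "\<forall>i<n. \<forall>j<n. matmul (matmul (adj A) m A) n H i j = idm i j"
    and HG: "\<forall>i<n. \<forall>j<n. matmul H n (matmul (adj A) m A) i j = idm i j"
    using matrix_inverse_exists[OF inj] by blast
  have "matmul (matmul (adj A) m A) n (matmul (pinv m n A) m B) i j
      = matmul (matmul (adj A) m A) n (matmul (matmul H n (adj A)) m B) i j"
    using pinv_eq_inverse_gram_mult_adj[of n A m H] GH HG
    by (intro matmul_cong refl) (auto intro: matmul_cong)
  also have "\<dots> = matmul (matmul (matmul (matmul (adj A) m A) n H) n (adj A)) m B i j"
    by (simp add: matmul_assoc)
  also have "\<dots> = matmul (adj A) m B i j"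
    using assms(2) GH by (intro matmul_cong matmul_idm_left) auto
  finally show ?thesis .
qed

subsection \<open>Block matrices\<close>

lemma sum_lessThan_mult_blocks: "(\<Sum>j<(k::nat) * d. f j) = (\<Sum>m<k. \<Sum>t<d. f (m * d + t))"
proof (induction k)
  case (Suc k)
  have "{..<Suc k * d} = {..<k * d} \<union> {k * d..<k * d + d}" by auto
  then have "(\<Sum>j<Suc k * d. f j) = (\<Sum>j<k * d. f j) + (\<Sum>j\<in>{k * d..<k * d + d}. f j)"
    by (simp add: sum.union_disjoint[symmetric] ivl_disj_int)
  also have "(\<Sum>j\<in>{k * d..<k * d + d}. f j) = (\<Sum>t<d. f (k * d + t))"
    by (rule sum.reindex_bij_witness[of _ "\<lambda>j. k * d + j" "\<lambda>j. j - k * d"]) auto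
  finally show ?case using Suc by simp
qed simp

lemma block_index_less: "l < k \<Longrightarrow> i < d \<Longrightarrow> l * d + i < k * (d::nat)"
proof -
  assume "l < k" "i < d"
  then have "l * d + i < Suc l * d" by simp
  also have "\<dots> \<le> k * d" using \<open>l < k\<close> by (intro mult_right_mono) auto
  finally show ?thesis .
qed

lemma matmul_block_entry:
  "matmul E (k * d) Z (l * d + i) (r * d + j)
     = (\<Sum>m<k. matmul (subblock d E l m) d (subblock d Z m r) i j)"
  unfolding matmul_def subblock_def by (rule sum_lessThan_mult_blocks)

lemma subblock_idm:
  assumes "i < d" and "j < d"
  shows "subblock d idm l m i j = (if l = m then idm i j else 0)"
proof -
  have "l * d + i = m * d + j \<longleftrightarrow> l = m \<and> i = j"
  proof -
    have "(l * d + i) div d = l" "(m * d + j) div d = m" "(l * d + i) mod d = i" "(m * d + j) mod d = j"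
      using assms by auto
    then show ?thesis by metis
  qed
  then show ?thesis by (simp add: subblock_def idm_def)
qed

lemma spec_norm_subblock_le:
  assumes eq: "\<forall>i<k * d. \<forall>j<q * d. Z i j + matmul E (k * d) Z i j = B i j"
    and "l < k" and "r < q"
  shows "spec_norm d d (subblock d Z l r) \<le> spec_norm d d (subblock d B l r)
     + (\<Sum>m<k. spec_norm d d (subblock d E l m) * spec_norm d d (subblock d Z m r))"
proof (rule spec_norm_le)
  show "0 \<le> spec_norm d d (subblock d B l r)
     + (\<Sum>m<k. spec_norm d d (subblock d E l m) * spec_norm d d (subblock d Z m r))"
    by (intro add_nonneg_nonneg sum_nonneg mult_nonneg_nonneg spec_norm_nonneg)
  fix x
  let ?Zx = "\<lambda>m. matvec d (subblock d Z m r) x"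
  have entry: "subblock d Z l r i j = subblock d B l r i j
      - (\<Sum>m<k. matmul (subblock d E l m) d (subblock d Z m r) i j)" if "i < d" "j < d" for i j
  proof -
    have "Z (l * d + i) (r * d + j) + matmul E (k * d) Z (l * d + i) (r * d + j) = B (l * d + i) (r * d + j)"
      using eq block_index_less[OF \<open>l < k\<close> that(1)] block_index_less[OF \<open>r < q\<close> that(2)] by blast
    then show ?thesis unfolding matmul_block_entry by (simp add: subblock_def algebra_simps)
  qed
  have "vnorm d (?Zx l) = vnorm d (\<lambda>i. matvec d (subblock d B l r) x i
      - (\<Sum>m<k. matvec d (subblock d E l m) (?Zx m) i))"
  proof (rule vnorm_cong)
    fix i assume "i < d"
    then have "?Zx l i = matvec d (subblock d B l r) x i
      - (\<Sum>m<k. matvec d (matmul (subblock d E l m) d (subblock d Z m r)) x i)"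
      unfolding matvec_def using entry
      by (simp add: left_diff_distrib sum_subtractf sum_distrib_right sum.swap[of _ "{..<d}"])
    then show "?Zx l i = matvec d (subblock d B l r) x i
      - (\<Sum>m<k. matvec d (subblock d E l m) (?Zx m) i)"
      by (simp add: matvec_matmul)
  qed
  also have "\<dots> \<le> vnorm d (matvec d (subblock d B l r) x)
      + vnorm d (\<lambda>i. \<Sum>m<k. matvec d (subblock d E l m) (?Zx m) i)"
    by (rule vnorm_diff_le)
  also have "\<dots> \<le> spec_norm d d (subblock d B l r) * vnorm d x
      + (\<Sum>m<k. vnorm d (matvec d (subblock d E l m) (?Zx m)))"
    by (intro add_mono vnorm_matvec_le vnorm_sum_le) simp
  also have "\<dots> \<le> spec_norm d d (subblock d B l r) * vnorm d x
      + (\<Sum>m<k. spec_norm d d (subblock d E l m) * (spec_norm d d (subblock d Z m r) * vnorm d x))"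
    by (intro add_left_mono sum_mono order_trans[OF vnorm_matvec_le]
        mult_left_mono vnorm_matvec_le spec_norm_nonneg)
  also have "\<dots> = (spec_norm d d (subblock d B l r)
     + (\<Sum>m<k. spec_norm d d (subblock d E l m) * spec_norm d d (subblock d Z m r))) * vnorm d x"
    by (simp only: distrib_right sum_distrib_right mult.assoc)
  finally show "vnorm d (?Zx l) \<le> (spec_norm d d (subblock d B l r)
     + (\<Sum>m<k. spec_norm d d (subblock d E l m) * spec_norm d d (subblock d Z m r))) * vnorm d x" .
qed

lemma block_column_sum_le:
  assumes GZ: "\<forall>i<k * d. \<forall>j<q * d. matmul G (k * d) Z i j = B i j"
    and E: "\<forall>m<k. (\<Sum>l<k. spec_norm d d (subblock d (\<lambda>a b. G a b - idm a b) l m)) \<le> e"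
    and "r < q"
  shows "(\<Sum>l<k. spec_norm d d (subblock d Z l r))
     \<le> (\<Sum>l<k. spec_norm d d (subblock d B l r)) + e * (\<Sum>m<k. spec_norm d d (subblock d Z m r))"
proof -
  let ?E = "\<lambda>a b. G a b - idm a b"
  have "\<forall>i<k * d. \<forall>j<q * d. Z i j + matmul ?E (k * d) Z i j = B i j"
    using GZ by (simp add: matmul_minus_idm)
  then have "(\<Sum>l<k. spec_norm d d (subblock d Z l r)) \<le> (\<Sum>l<k. spec_norm d d (subblock d B l r)
     + (\<Sum>m<k. spec_norm d d (subblock d ?E l m) * spec_norm d d (subblock d Z m r)))"
    by (intro sum_mono spec_norm_subblock_le[OF _ _ \<open>r < q\<close>]) auto
  also have "\<dots> = (\<Sum>l<k. spec_norm d d (subblock d B l r))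
     + (\<Sum>m<k. (\<Sum>l<k. spec_norm d d (subblock d ?E l m)) * spec_norm d d (subblock d Z m r))"
    unfolding sum.distrib sum_distrib_right by (subst sum.swap) (rule refl)
  also have "\<dots> \<le> (\<Sum>l<k. spec_norm d d (subblock d B l r))
     + (\<Sum>m<k. e * spec_norm d d (subblock d Z m r))"
    using E by (intro add_left_mono sum_mono mult_right_mono spec_norm_nonneg) auto
  finally show ?thesis by (simp add: sum_distrib_left)
qed

lemma injective_of_block_column_sums:
  assumes E: "\<forall>m<k. (\<Sum>l<k. spec_norm d d (subblock d (\<lambda>a b. G a b - idm a b) l m)) \<le> e"
    and "e < 1" and "0 < d"
    and Gv: "\<forall>i<k * d. matvec (k * d) G v i = 0"
  shows "\<forall>i<k * d. v i = 0"
proof -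
  \<comment> \<open>Apply the column-sum bound to \<open>v\<close> as the first column of a \<open>k d \<times> d\<close> matrix, with \<open>B = 0\<close>.\<close>
  define Z where "Z = (\<lambda>i (j::nat). if j = 0 then v i else (0::complex))"
  define S where "S = (\<Sum>l<k. spec_norm d d (subblock d Z l 0))"
  have "matmul G (k * d) Z i j = (if j = 0 then matvec (k * d) G v i else 0)" for i j
    by (simp add: matmul_def matvec_def Z_def)
  then have "\<forall>i<k * d. \<forall>j<1 * d. matmul G (k * d) Z i j = 0"
    using Gv by simp
  then have "S \<le> e * S"
    using block_column_sum_le[OF _ E, of 1 Z "\<lambda>_ _. 0" 0]
    by (simp add: S_def subblock_def spec_norm_zero)
  moreover have "0 \<le> S" unfolding S_def by (intro sum_nonneg spec_norm_nonneg)
  ultimately have "S = 0" using \<open>e < 1\<close> by (smt (verit) mult_le_cancel_right1)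
  then have "spec_norm d d (subblock d Z l 0) = 0" if "l < k" for l
    using that unfolding S_def by (subst (asm) sum_nonneg_eq_0_iff) (auto intro: spec_norm_nonneg)
  then have "v (l * d + t) = 0" if "l < k" "t < d" for l t
    using that spec_norm_eq_0_imp_entry_eq_0[of d d "subblock d Z l 0" t 0] \<open>0 < d\<close>
    by (simp add: subblock_def Z_def)
  then show ?thesis
    by (metis \<open>0 < d\<close> div_mult_mod_eq less_mult_imp_div_less mod_less_divisor)
qed

lemma rho_c_lt_1_of_block_column_sums:
  assumes GZ: "\<forall>i<k * d. \<forall>j<q * d. matmul G (k * d) Z i j = B i j"
    and E: "\<forall>m<k. (\<Sum>l<k. spec_norm d d (subblock d (\<lambda>a b. G a b - idm a b) l m)) \<le> e"
    and B: "\<forall>r<q. (\<Sum>l<k. spec_norm d d (subblock d B l r)) \<le> b"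
    and "0 \<le> b" and "b + e < 1"
  shows "rho_c k q d Z < 1"
proof -
  have "(\<Sum>l<k. spec_norm d d (subblock d Z l r)) < 1" if "r < q" for r
  proof -
    define S where "S = (\<Sum>l<k. spec_norm d d (subblock d Z l r))"
    have "S \<le> (\<Sum>l<k. spec_norm d d (subblock d B l r)) + e * S"
      using block_column_sum_le[OF GZ E that] by (simp add: S_def)
    then have "S \<le> b + e * S" using B that by (meson add_right_mono order_trans)
    show ?thesis unfolding S_def[symmetric]
    proof (rule ccontr)
      assume "\<not> S < 1"
      then have "(1 - e) * 1 \<le> (1 - e) * S" using assms(4,5) by (intro mult_left_mono) auto
      then show False using \<open>S \<le> b + e * S\<close> assms(4,5) by (simp add: algebra_simps)
    qed
  qed
  then show ?thesis
    unfolding rho_c_def by (subst Max_less_iff) auto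
qed

subsection \<open>Coherence bounds on Gram blocks\<close>

lemma subblock_gram_sel_blocks:
  assumes "0 < d" and "i < d" and "j < d"
  shows "subblock d (matmul (adj (sel_blocks d D ls)) L (sel_blocks d D ls')) l r i j
       = matmul (adj (blk d D (ls ! l))) L (blk d D (ls' ! r)) i j"
  using assms by (simp add: subblock_def matmul_def adj_def sel_blocks_def blk_def)

lemma spec_norm_cross_gram_le_block_coherence:
  assumes "0 < d" and "a < M" and "b < M" and "a \<noteq> b"
  shows "spec_norm d d (matmul (adj (blk d D a)) L (blk d D b)) \<le> real d * block_coherence L M d D"
proof -
  let ?f = "\<lambda>l r. spec_norm d d (matmul (adj (blk d D l)) L (blk d D r)) / real d"
  let ?S = "{?f l r | l r. l < M \<and> r < M \<and> r \<noteq> l}"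
  have "?S \<subseteq> (\<lambda>(l, r). ?f l r) ` ({..<M} \<times> {..<M})" by auto
  then have "finite ?S" by (rule finite_subset) simp
  moreover have "?f a b \<in> ?S" using assms by auto
  ultimately have "?f a b \<le> block_coherence L M d D"
    unfolding block_coherence_def by (intro Max_ge) auto
  then show ?thesis using \<open>0 < d\<close> by (simp add: field_simps)
qed

lemma pos_of_block_coherence_pos:
  assumes "block_coherence L M d D > 0"
  shows "0 < d"
proof (rule ccontr)
  assume "\<not> 0 < d"
  then have "block_coherence L M d D = Max (insert 0 {(0::real) | l r. l < M \<and> r < M \<and> r \<noteq> l})"
    by (simp add: block_coherence_def)
  also have "\<dots> \<le> 0"
    by (rule Max.boundedI) (auto intro: finite_subset[of _ "{0}"])
  finally show False using assms by simp
qed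

lemma finite_sub_coherence_set:
  fixes D :: "nat \<Rightarrow> nat \<Rightarrow> complex" and L M d :: nat
  shows "finite {cmod (\<Sum>i<L. cnj (D i (l * d + a)) * D i (l * d + b)) | l a b. l < M \<and> a < d \<and> b < d \<and> b \<noteq> a}"
  (is "finite {?f l a b | l a b. ?P l a b}")
proof -
  have "{?f l a b | l a b. ?P l a b} \<subseteq> (\<lambda>(l, a, b). ?f l a b) ` ({..<M} \<times> {..<d} \<times> {..<d})"
  proof clarify
    fix l a b assume "l < M" "a < d" "b < d"
    then show "?f l a b \<in> (\<lambda>(l, a, b). ?f l a b) ` ({..<M} \<times> {..<d} \<times> {..<d})"
      by (intro image_eqI[where x="(l, a, b)"]) auto
  qed
  then show ?thesis by (rule finite_subset) simp
qed

lemma sub_coherence_ge: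
  fixes D :: "nat \<Rightarrow> nat \<Rightarrow> complex" and L M d :: nat
  assumes "l < M" and "a < d" and "b < d" and "a \<noteq> b"
  shows "cmod (\<Sum>i<L. cnj (D i (l * d + a)) * D i (l * d + b)) \<le> sub_coherence L M d D"
proof -
  have "cmod (\<Sum>i<L. cnj (D i (l * d + a)) * D i (l * d + b))
      \<in> {cmod (\<Sum>i<L. cnj (D i (l * d + a)) * D i (l * d + b)) | l a b. l < M \<and> a < d \<and> b < d \<and> b \<noteq> a}"
    using assms by blast
  then show ?thesis
    unfolding sub_coherence_def using finite_sub_coherence_set by (intro Max_ge) auto
qed

lemma sub_coherence_nonneg: "0 \<le> sub_coherence L M d D"
  unfolding sub_coherence_def using finite_sub_coherence_set by (intro Max_ge) auto

lemma inner_self_eq_1_of_vnorm_eq_1: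
  assumes "vnorm L x = 1"
  shows "(\<Sum>i<L. cnj (x i) * x i) = 1"
proof -
  have "(\<Sum>i<L. (cmod (x i))\<^sup>2) = 1"
    using assms vnorm_power2[of L x] by simp
  then have "(\<Sum>i<L. complex_of_real ((cmod (x i))\<^sup>2)) = 1"
    by (metis of_real_1 of_real_sum)
  then show ?thesis unfolding complex_norm_square by (simp add: mult.commute)
qed

lemma spec_norm_diag_gram_minus_idm_le:
  assumes unit_cols: "\<forall>j<M * d. vnorm L (\<lambda>i. D i j) = 1" and "0 < d" and "a < M"
  shows "spec_norm d d (\<lambda>i j. matmul (adj (blk d D a)) L (blk d D a) i j - idm i j)
     \<le> (real d - 1) * sub_coherence L M d D"
proof (rule spec_norm_zero_diag_le[OF _ _ sub_coherence_nonneg \<open>0 < d\<close>])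
  fix i assume "i < d"
  then have "a * d + i < M * d" using \<open>a < M\<close> by (intro block_index_less)
  then show "matmul (adj (blk d D a)) L (blk d D a) i i - idm i i = 0"
    using unit_cols inner_self_eq_1_of_vnorm_eq_1[of L "\<lambda>p. D p (a * d + i)"]
    by (simp add: matmul_def adj_def blk_def idm_def)
next
  fix i j assume "i < d" "j < d" "i \<noteq> j"
  then show "cmod (matmul (adj (blk d D a)) L (blk d D a) i j - idm i j) \<le> sub_coherence L M d D"
    using sub_coherence_ge[OF \<open>a < M\<close> \<open>i < d\<close> \<open>j < d\<close> \<open>i \<noteq> j\<close>, where L=L and D=D]
    by (simp add: matmul_def adj_def blk_def idm_def)
qed

lemma gram_sel_blocks_column_sum_le:
  assumes unit_cols: "\<forall>j<M * d. vnorm L (\<lambda>i. D i j) = 1" and "0 < d"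
    and ls: "distinct ls" "set ls \<subseteq> {..<M}"
  shows "\<forall>m<length ls. (\<Sum>l<length ls. spec_norm d d
            (subblock d (\<lambda>a b. matmul (adj (sel_blocks d D ls)) L (sel_blocks d D ls) a b - idm a b) l m))
     \<le> (real d - 1) * sub_coherence L M d D + (real (length ls) - 1) * real d * block_coherence L M d D"
proof (intro allI impI)
  fix m assume "m < length ls"
  let ?E = "\<lambda>a b. matmul (adj (sel_blocks d D ls)) L (sel_blocks d D ls) a b - idm a b"
  have in_M: "ls ! l < M" if "l < length ls" for l
    using that ls(2) nth_mem by blast
  have block: "spec_norm d d (subblock d ?E l m)
      \<le> (if l = m then (real d - 1) * sub_coherence L M d D else real d * block_coherence L M d D)"
    if "l < length ls" for l
  proof -
    have "spec_norm d d (subblock d ?E l m) = spec_norm d d (\<lambda>i j.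
        matmul (adj (blk d D (ls ! l))) L (blk d D (ls ! m)) i j - (if l = m then idm i j else 0))"
    proof (rule spec_norm_cong)
      fix i j assume "i < d" "j < d"
      then show "subblock d ?E l m i j
          = matmul (adj (blk d D (ls ! l))) L (blk d D (ls ! m)) i j - (if l = m then idm i j else 0)"
        using subblock_gram_sel_blocks[OF \<open>0 < d\<close> \<open>i < d\<close> \<open>j < d\<close>, of D ls L ls l m]
          subblock_idm[OF \<open>i < d\<close> \<open>j < d\<close>, of l m]
        by (simp add: subblock_def)
    qed
    also have "\<dots> \<le> (if l = m then (real d - 1) * sub_coherence L M d D else real d * block_coherence L M d D)"
      using spec_norm_diag_gram_minus_idm_le[OF unit_cols \<open>0 < d\<close> in_M[OF that]]
        spec_norm_cross_gram_le_block_coherence[OF \<open>0 < d\<close> in_M[OF that] in_M[OF \<open>m < length ls\<close>]]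
        nth_eq_iff_index_eq[OF ls(1) that \<open>m < length ls\<close>]
      by auto
    finally show ?thesis .
  qed
  have "(\<Sum>l<length ls. spec_norm d d (subblock d ?E l m))
      \<le> (\<Sum>l<length ls. if l = m then (real d - 1) * sub_coherence L M d D else real d * block_coherence L M d D)"
    using block by (intro sum_mono) auto
  also have "\<dots> = (real d - 1) * sub_coherence L M d D
      + (\<Sum>l\<in>{..<length ls} - {m}. real d * block_coherence L M d D)"
    using \<open>m < length ls\<close> by (subst sum.remove[of _ m]) auto
  also have "\<dots> = (real d - 1) * sub_coherence L M d D + (real (length ls) - 1) * real d * block_coherence L M d D"
    using \<open>m < length ls\<close> by (simp add: of_nat_diff)
  finally show "(\<Sum>l<length ls. spec_norm d d (subblock d ?E l m))
     \<le> (real d - 1) * sub_coherence L M d D + (real (length ls) - 1) * real d * block_coherence L M d D" .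
qed

lemma cross_gram_sel_blocks_column_sum_le:
  assumes "0 < d" and "set ls \<subseteq> {..<M}" and "set ls' \<subseteq> {..<M}" and "set ls \<inter> set ls' = {}"
  shows "\<forall>r<length ls'. (\<Sum>l<length ls. spec_norm d d
            (subblock d (matmul (adj (sel_blocks d D ls)) L (sel_blocks d D ls')) l r))
     \<le> real (length ls) * real d * block_coherence L M d D"
proof (intro allI impI)
  fix r assume "r < length ls'"
  have "spec_norm d d (subblock d (matmul (adj (sel_blocks d D ls)) L (sel_blocks d D ls')) l r)
      \<le> real d * block_coherence L M d D" if "l < length ls" for l
  proof -
    have mem: "ls ! l \<in> set ls" "ls' ! r \<in> set ls'"
      using nth_mem[OF that] nth_mem[OF \<open>r < length ls'\<close>] .
    have "ls ! l < M" using subsetD[OF assms(2) mem(1)] by simp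
    moreover have "ls' ! r < M" using subsetD[OF assms(3) mem(2)] by simp
    moreover have "ls ! l \<noteq> ls' ! r" using assms(4) mem by (metis IntI empty_iff)
    ultimately have "spec_norm d d (matmul (adj (blk d D (ls ! l))) L (blk d D (ls' ! r)))
        \<le> real d * block_coherence L M d D"
      by (rule spec_norm_cross_gram_le_block_coherence[OF \<open>0 < d\<close>])
    moreover have "spec_norm d d (subblock d (matmul (adj (sel_blocks d D ls)) L (sel_blocks d D ls')) l r)
        = spec_norm d d (matmul (adj (blk d D (ls ! l))) L (blk d D (ls' ! r)))"
      by (rule spec_norm_cong) (simp add: subblock_gram_sel_blocks[OF \<open>0 < d\<close>])
    ultimately show ?thesis by simp
  qed
  then have "(\<Sum>l<length ls. spec_norm d d
            (subblock d (matmul (adj (sel_blocks d D ls)) L (sel_blocks d D ls')) l r))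
     \<le> (\<Sum>l<length ls. real d * block_coherence L M d D)"
    by (intro sum_mono) simp
  then show "(\<Sum>l<length ls. spec_norm d d
            (subblock d (matmul (adj (sel_blocks d D ls)) L (sel_blocks d D ls')) l r))
     \<le> real (length ls) * real d * block_coherence L M d D" by simp
qed

lemma coherence_condition_rearranged:
  fixes \<mu> \<nu> :: real
  assumes "0 < \<mu>" and "real (k * d) < 1 / 2 * (1 / \<mu> + real d - (real d - 1) * \<nu> / \<mu>)"
  shows "real k * real d * \<mu> + ((real d - 1) * \<nu> + (real k - 1) * real d * \<mu>) < 1"
proof -
  have "2 * \<mu> * real (k * d) < 2 * \<mu> * (1 / 2 * (1 / \<mu> + real d - (real d - 1) * \<nu> / \<mu>))"
    using assms by (intro mult_strict_left_mono) auto
  also have "\<dots> = 1 + real d * \<mu> - (real d - 1) * \<nu>"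
    using assms(1) by (simp add: field_simps)
  finally show ?thesis by (simp add: algebra_simps)
qed

theorem theorem3:
  fixes R M d k :: nat and D :: "nat \<Rightarrow> nat \<Rightarrow> complex" and \<Lambda>0 :: "nat set"
  assumes unit_cols: "\<forall>j < M * d. vnorm (R * d) (\<lambda>i. D i j) = 1"
    and spark: "\<forall>g. block_sparse M d (2 * k) g \<and> (\<exists>j < M * d. g j \<noteq> 0)
                  \<longrightarrow> (\<exists>i < R * d. matvec (M * d) D g i \<noteq> 0)"
    and muB_pos: "block_coherence (R * d) M d D > 0"
    and bound: "real (k * d) < 1 / 2 * (1 / block_coherence (R * d) M d D + real d
                  - (real d - 1) * sub_coherence (R * d) M d D / block_coherence (R * d) M d D)"
    and Lam: "\<Lambda>0 \<subseteq> {..<M}" "card \<Lambda>0 = k"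
  shows "rho_c k (M - k) d
           (matmul (pinv (R * d) (k * d) (sel_blocks d D (sorted_list_of_set \<Lambda>0))) (R * d)
                   (sel_blocks d D (sorted_list_of_set ({..<M} - \<Lambda>0)))) < 1"
proof -
  define ls0 where "ls0 = sorted_list_of_set \<Lambda>0"
  define ls1 where "ls1 = sorted_list_of_set ({..<M} - \<Lambda>0)"
  define A0 where "A0 = sel_blocks d D ls0"
  define mu where "mu = block_coherence (R * d) M d D"
  define nu where "nu = sub_coherence (R * d) M d D"
  define e where "e = (real d - 1) * nu + (real k - 1) * real d * mu"
  have "0 < d" using pos_of_block_coherence_pos muB_pos .
  have fin: "finite \<Lambda>0" using Lam(1) by (rule finite_subset) simp
  have ls0: "distinct ls0" "set ls0 \<subseteq> {..<M}" "length ls0 = k"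
    using fin Lam by (simp_all add: ls0_def)
  have ls1: "set ls1 \<subseteq> {..<M}" "set ls0 \<inter> set ls1 = {}" "length ls1 = M - k"
    using fin Lam by (simp_all add: ls0_def ls1_def card_Diff_subset)
  have E: "\<forall>m<k. (\<Sum>l<k. spec_norm d d
      (subblock d (\<lambda>a b. matmul (adj A0) (R * d) A0 a b - idm a b) l m)) \<le> e"
    using gram_sel_blocks_column_sum_le[OF unit_cols \<open>0 < d\<close> ls0(1,2)]
    by (simp only: ls0(3) A0_def e_def mu_def nu_def)
  have B: "\<forall>r<M - k. (\<Sum>l<k. spec_norm d d
      (subblock d (matmul (adj A0) (R * d) (sel_blocks d D ls1)) l r)) \<le> real k * real d * mu"
    using cross_gram_sel_blocks_column_sum_le[OF \<open>0 < d\<close> ls0(2) ls1(1,2)]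
    by (simp only: ls0(3) ls1(3) A0_def mu_def)
  have sum_lt_1: "real k * real d * mu + e < 1"
    using coherence_condition_rearranged[OF muB_pos bound] unfolding e_def mu_def nu_def .
  have kdmu_nonneg: "0 \<le> real k * real d * mu" using muB_pos by (simp add: mu_def)
  with sum_lt_1 have "e < 1" by linarith
  have inj: "\<And>v. \<forall>i<k * d. matvec (k * d) (matmul (adj A0) (R * d) A0) v i = 0 \<Longrightarrow> \<forall>i<k * d. v i = 0"
    by (rule injective_of_block_column_sums[OF E \<open>e < 1\<close> \<open>0 < d\<close>])
  have GZ: "\<forall>i<k * d. \<forall>j<(M - k) * d. matmul (matmul (adj A0) (R * d) A0) (k * d)
      (matmul (pinv (R * d) (k * d) A0) (R * d) (sel_blocks d D ls1)) i j
      = matmul (adj A0) (R * d) (sel_blocks d D ls1) i j"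
    by (intro allI impI) (rule pinv_solves_normal_equations[OF inj])
  from rho_c_lt_1_of_block_column_sums[OF GZ E B kdmu_nonneg sum_lt_1]
  show ?thesis unfolding A0_def ls0_def ls1_def .
qed

end
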